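(* Let $\|\cdot\|$ be a norm on $\mathbb{R}^d$, $\epsilon>0$, and $A\subseteq\mathbb{R}^d$. Then $$A=(A^{-\epsilon})^\epsilon\sqcup F(A),\qquad (A^\epsilon)^{-\epsilon}=A\sqcup F(A^C),$$ where $\sqcup$ denotes disjoint union.
   Context: $\overline{B_\epsilon(\mathbf a)}=\{\mathbf z:\|\mathbf z-\mathbf a\|\le\epsilon\}$; $A^\epsilon=\bigcup_{\mathbf a\in A}\overline{B_\epsilon(\mathbf a)}$ ($=A\oplus\overline{B_\epsilon(\mathbf 0)}$) and $A^{-\epsilon}=((A^C)^\epsilon)^C$. For a set $S$, $F(S)=\{\mathbf x\in S:\text{every closed }\epsilon\text{-ball }\overline{B_\epsilon(\mathbf y)}\text{ containing }\mathbf x\text{ also intersects }S^C\}$. *)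

theory Defs
  imports "HOL-Analysis.Analysis"
begin

definition is_norm :: "(real^'d \<Rightarrow> real) \<Rightarrow> bool" where
  "is_norm N \<longleftrightarrow> (\<forall>x. 0 \<le> N x) \<and> (\<forall>x. N x = 0 \<longleftrightarrow> x = 0)
     \<and> (\<forall>c x. N (c *\<^sub>R x) = \<bar>c\<bar> * N x) \<and> (\<forall>x y. N (x + y) \<le> N x + N y)"

definition ncball :: "(real^'d \<Rightarrow> real) \<Rightarrow> real^'d \<Rightarrow> real \<Rightarrow> (real^'d) set" where
  "ncball N a e = {z. N (z - a) \<le> e}"

definition dilate :: "(real^'d \<Rightarrow> real) \<Rightarrow> real \<Rightarrow> (real^'d) set \<Rightarrow> (real^'d) set" where
  "dilate N e A = (\<Union>a\<in>A. ncball N a e)"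

definition erode :: "(real^'d \<Rightarrow> real) \<Rightarrow> real \<Rightarrow> (real^'d) set \<Rightarrow> (real^'d) set" where
  "erode N e A = - dilate N e (- A)"

definition Fset :: "(real^'d \<Rightarrow> real) \<Rightarrow> real \<Rightarrow> (real^'d) set \<Rightarrow> (real^'d) set" where
  "Fset N e S = {x \<in> S. \<forall>y. x \<in> ncball N y e \<longrightarrow> ncball N y e \<inter> - S \<noteq> {}}"

end

theory Submission
  imports Defs
begin

text \<open>A point of \<open>A\<close> either lies in some closed \<open>\<epsilon>\<close>-ball contained in \<open>A\<close>, i.e. in the
  opening \<open>(A\<^sup>-\<^sup>\<epsilon>)\<^sup>\<epsilon>\<close>, or it does not, which is the defining property of \<open>F(A)\<close>.
  Dually, since balls are symmetric, \<open>x\<close> lies in the closing \<open>(A\<^sup>\<epsilon>)\<^sup>-\<^sup>\<epsilon>\<close> iff every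
  \<open>\<epsilon>\<close>-ball containing \<open>x\<close> meets \<open>A\<close>; for \<open>x \<notin> A\<close> this says \<open>x \<in> F(A\<^sup>C)\<close>.
  Only the symmetry \<open>N (-x) = N x\<close> of the norm is used.\<close>

lemma is_norm_minus:
  assumes "is_norm N"
  shows "N (- x) = N x"
proof -
  have "N ((-1) *\<^sub>R x) = \<bar>-1\<bar> * N x"
    using assms unfolding is_norm_def by blast
  then show ?thesis by simp
qed

lemma mem_ncball_commute:
  assumes "\<And>x. N (- x) = N x"
  shows "x \<in> ncball N y e \<longleftrightarrow> y \<in> ncball N x e"
  unfolding ncball_def using assms[of "x - y"] by simp

lemma mem_dilate_iff: "x \<in> dilate N e A \<longleftrightarrow> (\<exists>a\<in>A. x \<in> ncball N a e)"
  unfolding dilate_def by blast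

lemma mem_erode_iff:
  assumes "\<And>x. N (- x) = N x"
  shows "x \<in> erode N e A \<longleftrightarrow> ncball N x e \<subseteq> A"
  unfolding erode_def Compl_iff mem_dilate_iff subset_iff
  using mem_ncball_commute[where N = N, OF assms] by blast

lemma mem_opening_iff:
  assumes "\<And>x. N (- x) = N x"
  shows "x \<in> dilate N e (erode N e A) \<longleftrightarrow> (\<exists>y. x \<in> ncball N y e \<and> ncball N y e \<subseteq> A)"
  by (auto simp: mem_dilate_iff mem_erode_iff[where N = N, OF assms])

lemma mem_closing_iff:
  assumes "\<And>x. N (- x) = N x"
  shows "x \<in> erode N e (dilate N e A) \<longleftrightarrow> (\<forall>y. x \<in> ncball N y e \<longrightarrow> ncball N y e \<inter> A \<noteq> {})"
  unfolding mem_erode_iff[where N = N, OF assms] subset_iff mem_dilate_iff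
  using mem_ncball_commute[where N = N, OF assms] by blast

lemma mem_Fset_iff_notin_opening:
  assumes "\<And>x. N (- x) = N x"
  shows "x \<in> Fset N e A \<longleftrightarrow> x \<in> A \<and> x \<notin> dilate N e (erode N e A)"
  by (auto simp: Fset_def mem_opening_iff[where N = N, OF assms] disjoint_eq_subset_Compl)

lemma mem_Fset_Compl_iff_in_closing:
  assumes "\<And>x. N (- x) = N x"
  shows "x \<in> Fset N e (- A) \<longleftrightarrow> x \<notin> A \<and> x \<in> erode N e (dilate N e A)"
  by (simp add: Fset_def mem_closing_iff[where N = N, OF assms])

lemma opening_subset:
  assumes "\<And>x. N (- x) = N x"
  shows "dilate N e (erode N e A) \<subseteq> A"
  by (auto simp: mem_opening_iff[where N = N, OF assms])

lemma subset_closing: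
  assumes "\<And>x. N (- x) = N x"
  shows "A \<subseteq> erode N e (dilate N e A)"
  by (auto simp: mem_closing_iff[where N = N, OF assms])

theorem lemma20:
  fixes N :: "real^'d \<Rightarrow> real" and e :: real and A :: "(real^'d) set"
  assumes "is_norm N" and "e > 0"
  shows "A = dilate N e (erode N e A) \<union> Fset N e A
         \<and> dilate N e (erode N e A) \<inter> Fset N e A = {}
         \<and> erode N e (dilate N e A) = A \<union> Fset N e (- A)
         \<and> A \<inter> Fset N e (- A) = {}"
proof (intro conjI)
  note symmetric = is_norm_minus[OF assms(1)]
  note opening_le = opening_subset[where N = N, OF symmetric]
    and Fset_opening = mem_Fset_iff_notin_opening[where N = N, OF symmetric]
    and le_closing = subset_closing[where N = N, OF symmetric]
    and Fset_closing = mem_Fset_Compl_iff_in_closing[where N = N, OF symmetric]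
  show "A = dilate N e (erode N e A) \<union> Fset N e A"
    using opening_le by (auto simp: Fset_opening)
  show "dilate N e (erode N e A) \<inter> Fset N e A = {}"
    by (auto simp: Fset_opening)
  show "erode N e (dilate N e A) = A \<union> Fset N e (- A)"
    using le_closing by (auto simp: Fset_closing)
  show "A \<inter> Fset N e (- A) = {}"
    by (auto simp: Fset_closing)
qed

end
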